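(* Let $q$ be a distribution over prompts $\mathbf{x}$, let $p_{\mathrm{data}}(\cdot\mid\mathbf{x})$ be the target conditional distribution of responses, and let $\{p_{\boldsymbol{\theta}}(\cdot\mid\mathbf{x}) : \boldsymbol{\theta}\in\boldsymbol{\Theta}\}$ be a parametrized family of conditional distributions. Let $\ell(t)=\log(1+\exp(-t))$ be the logistic loss, let $\lambda>0$, and for $\boldsymbol{\theta},\boldsymbol{\theta}_t\in\boldsymbol{\Theta}$ define $$L_{\mathrm{SPIN}}(\boldsymbol{\theta},\boldsymbol{\theta}_t)=\mathbb{E}_{\mathbf{x}\sim q(\cdot),\,\mathbf{y}\sim p_{\mathrm{data}}(\cdot\mid\mathbf{x}),\,\mathbf{y}'\sim p_{\boldsymbol{\theta}_t}(\cdot\mid\mathbf{x})}\Big[\ell\Big(\lambda\log\frac{p_{\boldsymbol{\theta}}(\mathbf{y}\mid\mathbf{x})}{p_{\boldsymbol{\theta}_t}(\mathbf{y}\mid\mathbf{x})}-\lambda\log\frac{p_{\boldsymbol{\theta}}(\mathbf{y}'\mid\mathbf{x})}{p_{\boldsymbol{\theta}_t}(\mathbf{y}'\mid\mathbf{x})}\Big)\Big].$$ Suppose that the conditional distribution (normalized over $\mathbf{y}$ for each $\mathbf{x}$) proportional to $p_{\boldsymbol{\theta}_t}(\mathbf{y}\mid\mathbf{x})\big(p_{\mathrm{data}}(\mathbf{y}\mid\mathbf{x})/p_{\boldsymbol{\theta}_t}(\mathbf{y}\mid\mathbf{x})\big)^{1/\lambda}$ lies in $\{p_{\boldsymbol{\theta}}(\cdot\mid\mathbf{x})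 : \boldsymbol{\theta}\in\boldsymbol{\Theta}\}$, and that $\boldsymbol{\theta}_{t+1}$ is a global minimum of $\boldsymbol{\theta}\mapsto L_{\mathrm{SPIN}}(\boldsymbol{\theta},\boldsymbol{\theta}_t)$. Then $$p_{\boldsymbol{\theta}_{t+1}}(\mathbf{y}\mid\mathbf{x})\propto p_{\boldsymbol{\theta}_t}(\mathbf{y}\mid\mathbf{x})\big(p_{\mathrm{data}}(\mathbf{y}\mid\mathbf{x})/p_{\boldsymbol{\theta}_t}(\mathbf{y}\mid\mathbf{x})\big)^{1/\lambda},$$ where proportionality is in $\mathbf{y}$ for each fixed $\mathbf{x}$.
   Context: Prompts $\mathbf{x}$ and responses $\mathbf{y}$ are token sequences; $p_{\boldsymbol{\theta}}(\mathbf{y}\mid\mathbf{x})$ is the conditional probability assigned by the model with parameter $\boldsymbol{\theta}$. All conditional probabilities are assumed positive so that log-ratios are well defined. *)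

theory Defs
  imports "HOL-Probability.Probability"
begin

definition logistic_loss :: "real \<Rightarrow> real" where
  "logistic_loss t = ln (1 + exp (- t))"

text \<open>SPIN population loss L_SPIN(theta, theta_t), as an expectation (nonnegative integral,
  so it is always well defined, possibly infinite) over x ~ q, y ~ p_data(.|x), y' ~ p_theta_t(.|x)
  (independent given x).\<close>
definition L_SPIN ::
  "'x pmf \<Rightarrow> ('x \<Rightarrow> 'y pmf) \<Rightarrow> ('th \<Rightarrow> 'x \<Rightarrow> 'y pmf) \<Rightarrow> real \<Rightarrow> 'th \<Rightarrow> 'th \<Rightarrow> ennreal" where
  "L_SPIN q pdata p lam \<theta> \<theta>t =
     (\<integral>\<^sup>+ x. (\<integral>\<^sup>+ yy.
        ennreal (logistic_loss
          (lam * ln (pmf (p \<theta> x) (fst yy) / pmf (p \<theta>t x) (fst yy))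
           - lam * ln (pmf (p \<theta> x) (snd yy) / pmf (p \<theta>t x) (snd yy))))
      \<partial>(measure_pmf (pair_pmf (pdata x) (p \<theta>t x)))) \<partial>(measure_pmf q))"

definition proportional :: "('y \<Rightarrow> real) \<Rightarrow> ('y \<Rightarrow> real) \<Rightarrow> bool" where
  "proportional f g \<longleftrightarrow> (\<exists>c>0. \<forall>y. f y = c * g y)"

end

theory Submission
  imports Defs
begin

(* For fixed x put P = p_data(.|x), Q = p_theta_t(.|x) and u(y) = lam log(p_theta(y|x) / Q(y)); the
   inner expectation of L_SPIN is the pairwise logistic risk E_{y~P, y'~Q} l(u y - u y').
   Symmetrising in (y, y'), a pair contributes a l(t) + b l(-t) with a = P(y) Q(y'),
   b = P(y') Q(y), t = u y - u y'.  This binary cross-entropy is uniquely minimised at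
   t = log(a/b), so the risk is minimised exactly by the scores u = log(P/Q) + const, and the
   minimum is finite (at most log 2, the risk of u = 0).  Realisability puts such a minimiser in
   the family, hence a global minimiser theta_{t+1} attains this minimum for q-almost every x,
   i.e. lam log(p_{theta_{t+1}}/Q) = log(P/Q) + c(x), which is the claimed proportionality. *)

lemma AE_eq_if_nn_integral_le:
  fixes f g :: "'a \<Rightarrow> ennreal"
  assumes "f \<in> borel_measurable M" "g \<in> borel_measurable M"
    and "AE x in M. f x \<le> g x" "(\<integral>\<^sup>+x. g x \<partial>M) \<le> (\<integral>\<^sup>+x. f x \<partial>M)" "(\<integral>\<^sup>+x. f x \<partial>M) \<noteq> \<infinity>"
  shows "AE x in M. g x = f x"
proof -
  have "\<not> (\<integral>\<^sup>+x. f x \<partial>M) < (\<integral>\<^sup>+x. g x \<partial>M)"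
    using assms(4) by simp
  then have "AE x in M. g x \<le> f x"
    using nn_integral_less[OF assms(1,2,5,3)] by blast
  with assms(3) show ?thesis
    by eventually_elim simp
qed

lemma exp_mean_one_imp_mean_nonpos:
  fixes a b s r :: real
  assumes "a > 0" "b > 0" and exp_mean: "a * exp s + b * exp r = a + b"
  shows "a * s + b * r \<le> 0" and "a * s + b * r = 0 \<Longrightarrow> s = 0"
proof -
  have "s \<le> exp s - 1" "r \<le> exp r - 1"
    using exp_ge_add_one_self[of s] exp_ge_add_one_self[of r] by linarith+
  then have s_le: "a * s \<le> a * (exp s - 1)" and r_le: "b * r \<le> b * (exp r - 1)"
    using assms(1,2) by simp_all
  moreover have "a * (exp s - 1) + b * (exp r - 1) = 0"
    using exp_mean by (simp add: algebra_simps)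
  ultimately show "a * s + b * r \<le> 0" by linarith
  assume "a * s + b * r = 0"
  then have "a * s = a * (exp s - 1)"
    using s_le r_le \<open>a * (exp s - 1) + b * (exp r - 1) = 0\<close> by linarith
  then have "\<not> 1 - (- s) < exp (- (- s))"
    using assms(1) by simp
  then show "s = 0"
    using exp_minus_greater[of "- s"] by simp
qed

lemma exp_logistic_loss: "exp (logistic_loss t) = 1 + exp (- t)"
  unfolding logistic_loss_def by (simp add: add_pos_pos)

lemma logistic_loss_nonneg: "logistic_loss t \<ge> 0"
  unfolding logistic_loss_def by (simp add: add_pos_pos)

lemma logistic_loss_zero: "logistic_loss 0 = ln 2"
  unfolding logistic_loss_def by simp

lemma logistic_loss_inj: "logistic_loss s = logistic_loss t \<Longrightarrow> s = t"
  by (metis exp_logistic_loss add_left_cancel exp_inj_iff neg_equal_iff_equal)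

context
  fixes a b :: real
  assumes a_pos: "a > 0" and b_pos: "b > 0"
begin

private lemma logistic_pair_loss_gap:
  "a * exp (logistic_loss (ln (a / b)) - logistic_loss t)
   + b * exp (logistic_loss (- ln (a / b)) - logistic_loss (- t)) = a + b"
proof -
  define v where "v = exp (- t)"
  have v_pos: "v > 0" by (simp add: v_def)
  have loss_t: "exp (logistic_loss t) = 1 + v" "exp (logistic_loss (- t)) = 1 + 1 / v"
    by (simp_all add: v_def exp_logistic_loss exp_minus divide_inverse)
  have loss_opt: "exp (logistic_loss (ln (a / b))) = 1 + b / a"
    "exp (logistic_loss (- ln (a / b))) = 1 + a / b"
    using a_pos b_pos by (simp_all add: exp_logistic_loss exp_minus)
  have "a * exp (logistic_loss (ln (a / b)) - logistic_loss t)
      + b * exp (logistic_loss (- ln (a / b)) - logistic_loss (- t))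
      = a * ((1 + b / a) / (1 + v)) + b * ((1 + a / b) / (1 + 1 / v))"
    by (simp only: exp_diff loss_t loss_opt)
  also have "\<dots> = (a + b) / (1 + v) + (a + b) * v / (1 + v)"
    using a_pos b_pos v_pos by (simp add: divide_simps) (simp add: algebra_simps)
  also have "\<dots> = a + b"
    using v_pos by (simp add: divide_simps) (simp add: algebra_simps)
  finally show ?thesis .
qed

lemma logistic_pair_loss_ge:
  "a * logistic_loss (ln (a / b)) + b * logistic_loss (- ln (a / b))
   \<le> a * logistic_loss t + b * logistic_loss (- t)"
  using exp_mean_one_imp_mean_nonpos(1)[OF a_pos b_pos logistic_pair_loss_gap]
  by (simp add: algebra_simps)

lemma logistic_pair_loss_eq_imp:
  assumes "a * logistic_loss (ln (a / b)) + b * logistic_loss (- ln (a / b))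
    = a * logistic_loss t + b * logistic_loss (- t)"
  shows "t = ln (a / b)"
  using exp_mean_one_imp_mean_nonpos(2)[OF a_pos b_pos logistic_pair_loss_gap] assms
  by (auto simp: algebra_simps dest: logistic_loss_inj)

end

definition pair_logistic_risk :: "'y pmf \<Rightarrow> 'y pmf \<Rightarrow> ('y \<Rightarrow> real) \<Rightarrow> ennreal" where
  "pair_logistic_risk P Q u =
     (\<integral>\<^sup>+ yy. ennreal (logistic_loss (u (fst yy) - u (snd yy))) \<partial>measure_pmf (pair_pmf P Q))"

definition symmetrized_pair_loss :: "'y pmf \<Rightarrow> 'y pmf \<Rightarrow> ('y \<Rightarrow> real) \<Rightarrow> 'y \<times> 'y \<Rightarrow> real" where
  "symmetrized_pair_loss P Q u z =
     pmf P (fst z) * pmf Q (snd z) * logistic_loss (u (fst z) - u (snd z))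
     + pmf P (snd z) * pmf Q (fst z) * logistic_loss (u (snd z) - u (fst z))"

lemma symmetrized_pair_loss_nonneg: "symmetrized_pair_loss P Q u z \<ge> 0"
  by (simp add: symmetrized_pair_loss_def logistic_loss_nonneg)

lemma pair_logistic_risk_cong_add_const:
  assumes "\<And>y. u y = v y + c"
  shows "pair_logistic_risk P Q u = pair_logistic_risk P Q v"
  by (simp add: pair_logistic_risk_def assms)

lemma pair_logistic_risk_zero: "pair_logistic_risk P Q (\<lambda>_. 0) = ennreal (ln 2)"
  by (simp add: pair_logistic_risk_def logistic_loss_zero)

lemma pair_logistic_risk_count_space:
  "pair_logistic_risk P Q u =
     (\<integral>\<^sup>+ z. ennreal (pmf P (fst z) * pmf Q (snd z) * logistic_loss (u (fst z) - u (snd z)))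
      \<partial>count_space UNIV)"
  unfolding pair_logistic_risk_def nn_integral_measure_pmf
  by (intro nn_integral_cong) (auto simp: pmf_pair ennreal_mult logistic_loss_nonneg)

lemma pair_logistic_risk_double:
  "pair_logistic_risk P Q u + pair_logistic_risk P Q u =
     (\<integral>\<^sup>+ z. ennreal (symmetrized_pair_loss P Q u z) \<partial>count_space UNIV)"
proof -
  let ?f = "\<lambda>z. ennreal (pmf P (fst z) * pmf Q (snd z) * logistic_loss (u (fst z) - u (snd z)))"
  have "pair_logistic_risk P Q u = (\<integral>\<^sup>+ z. ?f (prod.swap z) \<partial>count_space UNIV)"
    unfolding pair_logistic_risk_count_space
    by (rule nn_integral_bij_count_space[OF bij_swap, symmetric])
  then have "pair_logistic_risk P Q u + pair_logistic_risk P Q u =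
      (\<integral>\<^sup>+ z. ?f z + ?f (prod.swap z) \<partial>count_space UNIV)"
    by (simp add: nn_integral_add pair_logistic_risk_count_space)
  also have "\<dots> = (\<integral>\<^sup>+ z. ennreal (symmetrized_pair_loss P Q u z) \<partial>count_space UNIV)"
    by (intro nn_integral_cong)
      (simp add: symmetrized_pair_loss_def logistic_loss_nonneg ennreal_plus[symmetric] del: ennreal_plus)
  finally show ?thesis .
qed

context
  fixes P Q :: "'y pmf"
  assumes P_pos: "\<And>y. pmf P y > 0" and Q_pos: "\<And>y. pmf Q y > 0"
begin

lemma symmetrized_pair_loss_as_logistic_pair:
  fixes z :: "'y \<times> 'y"
  defines "\<alpha> \<equiv> pmf P (fst z) * pmf Q (snd z)" and "\<beta> \<equiv> pmf P (snd z) * pmf Q (fst z)"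
  shows "\<alpha> > 0" and "\<beta> > 0"
    and "symmetrized_pair_loss P Q u z
      = \<alpha> * logistic_loss (u (fst z) - u (snd z)) + \<beta> * logistic_loss (- (u (fst z) - u (snd z)))"
    and "ln (pmf P (fst z) / pmf Q (fst z)) - ln (pmf P (snd z) / pmf Q (snd z)) = ln (\<alpha> / \<beta>)"
  using P_pos[of "fst z"] P_pos[of "snd z"] Q_pos[of "fst z"] Q_pos[of "snd z"]
  by (simp_all add: \<alpha>_def \<beta>_def symmetrized_pair_loss_def ln_div ln_mult)

lemma symmetrized_pair_loss_log_ratio_le:
  "symmetrized_pair_loss P Q (\<lambda>y. ln (pmf P y / pmf Q y)) z \<le> symmetrized_pair_loss P Q u z"
  using logistic_pair_loss_ge[OF symmetrized_pair_loss_as_logistic_pair(1,2)]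
  by (simp only: symmetrized_pair_loss_as_logistic_pair(3,4))

lemma symmetrized_pair_loss_eq_log_ratio_imp:
  assumes "symmetrized_pair_loss P Q u z = symmetrized_pair_loss P Q (\<lambda>y. ln (pmf P y / pmf Q y)) z"
  shows "u (fst z) - u (snd z) = ln (pmf P (fst z) / pmf Q (fst z)) - ln (pmf P (snd z) / pmf Q (snd z))"
  using logistic_pair_loss_eq_imp[OF symmetrized_pair_loss_as_logistic_pair(1,2)] assms
  by (simp only: symmetrized_pair_loss_as_logistic_pair(3,4))

lemma pair_logistic_risk_log_ratio_le:
  "pair_logistic_risk P Q (\<lambda>y. ln (pmf P y / pmf Q y)) \<le> pair_logistic_risk P Q u"
proof -
  have "2 * pair_logistic_risk P Q (\<lambda>y. ln (pmf P y / pmf Q y)) \<le> 2 * pair_logistic_risk P Q u"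
    unfolding mult_2 pair_logistic_risk_double
    by (intro nn_integral_mono ennreal_leI symmetrized_pair_loss_log_ratio_le)
  then show ?thesis
    by (simp add: ennreal_mult_le_mult_iff)
qed

lemma pair_logistic_risk_log_ratio_le_ln2:
  "pair_logistic_risk P Q (\<lambda>y. ln (pmf P y / pmf Q y)) \<le> ennreal (ln 2)"
  using pair_logistic_risk_log_ratio_le[of "\<lambda>_. 0"] by (simp add: pair_logistic_risk_zero)

lemma pair_logistic_risk_le_log_ratio_imp:
  assumes "pair_logistic_risk P Q u \<le> pair_logistic_risk P Q (\<lambda>y. ln (pmf P y / pmf Q y))"
  shows "\<exists>c. \<forall>y. u y = ln (pmf P y / pmf Q y) + c"
proof -
  let ?u\<^sub>0 = "\<lambda>y. ln (pmf P y / pmf Q y)"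
  have "AE z in count_space UNIV.
      ennreal (symmetrized_pair_loss P Q u z) = ennreal (symmetrized_pair_loss P Q ?u\<^sub>0 z)"
  proof (rule AE_eq_if_nn_integral_le)
    show "(\<integral>\<^sup>+ z. ennreal (symmetrized_pair_loss P Q u z) \<partial>count_space UNIV)
        \<le> (\<integral>\<^sup>+ z. ennreal (symmetrized_pair_loss P Q ?u\<^sub>0 z) \<partial>count_space UNIV)"
      using add_mono[OF assms assms] by (simp only: pair_logistic_risk_double)
    show "(\<integral>\<^sup>+ z. ennreal (symmetrized_pair_loss P Q ?u\<^sub>0 z) \<partial>count_space UNIV) \<noteq> \<infinity>"
      using pair_logistic_risk_log_ratio_le_ln2
      by (auto simp: top_unique simp flip: pair_logistic_risk_double)
  qed (auto intro: ennreal_leI symmetrized_pair_loss_log_ratio_le)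
  then have "symmetrized_pair_loss P Q u z = symmetrized_pair_loss P Q ?u\<^sub>0 z" for z
    by (cases z) (simp add: AE_count_space symmetrized_pair_loss_nonneg)
  then have "u y - u y\<^sub>0 = ?u\<^sub>0 y - ?u\<^sub>0 y\<^sub>0" for y y\<^sub>0
    using symmetrized_pair_loss_eq_log_ratio_imp[of u "(y, y\<^sub>0)"] by simp
  then have "\<forall>y. u y = ?u\<^sub>0 y + (u undefined - ?u\<^sub>0 undefined)"
    by (metis add_diff_cancel_left' diff_add_cancel diff_diff_eq2)
  then show ?thesis ..
qed

end

lemma proportional_powr_iff:
  fixes f g h :: "'y \<Rightarrow> real" and lam :: real
  assumes "lam > 0" and "\<And>y. f y > 0" "\<And>y. g y > 0" "\<And>y. h y > 0"
  shows "proportional f (\<lambda>y. g y * h y powr (1 / lam))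
     \<longleftrightarrow> (\<exists>c. \<forall>y. lam * ln (f y / g y) = ln (h y) + c)"
proof
  assume "proportional f (\<lambda>y. g y * h y powr (1 / lam))"
  then obtain k where "k > 0" and k: "\<And>y. f y = k * (g y * h y powr (1 / lam))"
    unfolding proportional_def by blast
  have "lam * ln (f y / g y) = ln (h y) + lam * ln k" for y
  proof -
    have "f y / g y = k * h y powr (1 / lam)"
      using k[of y] assms(3)[of y] by simp
    then have "ln (f y / g y) = ln k + ln (h y) / lam"
      using \<open>k > 0\<close> assms(4)[of y] by (simp add: ln_mult ln_powr)
    then show ?thesis
      using \<open>lam > 0\<close> by (simp add: field_simps)
  qed
  then show "\<exists>c. \<forall>y. lam * ln (f y / g y) = ln (h y) + c" by blast
next
  assume "\<exists>c. \<forall>y. lam * ln (f y / g y) = ln (h y) + c"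
  then obtain c where c: "\<And>y. lam * ln (f y / g y) = ln (h y) + c" by blast
  have "f y = exp (c / lam) * (g y * h y powr (1 / lam))" for y
  proof -
    have "ln (f y / g y) = (ln (h y) + c) / lam"
      using c[of y] \<open>lam > 0\<close> by (simp add: field_simps)
    then have "f y / g y = exp ((ln (h y) + c) / lam)"
      using assms(2,3)[of y] by (metis divide_pos_pos exp_ln)
    also have "\<dots> = exp (c / lam) * h y powr (1 / lam)"
      using assms(4)[of y] by (simp add: powr_def exp_add[symmetric] add_divide_distrib)
    finally show ?thesis
      using assms(3)[of y] by (simp add: field_simps)
  qed
  then show "proportional f (\<lambda>y. g y * h y powr (1 / lam))"
    unfolding proportional_def by (metis exp_gt_zero)
qed

lemma L_SPIN_eq_pair_logistic_risk:
  "L_SPIN q pdata p lam \<theta> \<theta>t = (\<integral>\<^sup>+x. pair_logistic_risk (pdata x) (p \<theta>t x)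
     (\<lambda>y. lam * ln (pmf (p \<theta> x) y / pmf (p \<theta>t x) y)) \<partial>q)"
  by (simp add: L_SPIN_def pair_logistic_risk_def)

theorem theorem5p4:
  fixes q :: "'x pmf" and pdata :: "'x \<Rightarrow> 'y pmf" and p :: "'th \<Rightarrow> 'x \<Rightarrow> 'y pmf"
    and \<Theta> :: "'th set" and lam :: real and \<theta>t \<theta>t1 :: 'th
  assumes lam_pos: "lam > 0"
    and pdata_pos: "\<And>x y. pmf (pdata x) y > 0"
    and p_pos: "\<And>\<theta> x y. \<theta> \<in> \<Theta> \<Longrightarrow> pmf (p \<theta> x) y > 0"
    and \<theta>t_in: "\<theta>t \<in> \<Theta>"
    and realizable: "\<exists>\<theta>\<in>\<Theta>. \<forall>x. proportional (pmf (p \<theta> x))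
        (\<lambda>y. pmf (p \<theta>t x) y * (pmf (pdata x) y / pmf (p \<theta>t x) y) powr (1 / lam))"
    and \<theta>t1_in: "\<theta>t1 \<in> \<Theta>"
    and \<theta>t1_min: "\<And>\<theta>. \<theta> \<in> \<Theta> \<Longrightarrow> L_SPIN q pdata p lam \<theta>t1 \<theta>t \<le> L_SPIN q pdata p lam \<theta> \<theta>t"
  shows "\<forall>x \<in> set_pmf q. proportional (pmf (p \<theta>t1 x))
        (\<lambda>y. pmf (p \<theta>t x) y * (pmf (pdata x) y / pmf (p \<theta>t x) y) powr (1 / lam))"
proof -
  define R where "R \<theta> x = pair_logistic_risk (pdata x) (p \<theta>t x)
    (\<lambda>y. lam * ln (pmf (p \<theta> x) y / pmf (p \<theta>t x) y))" for \<theta> x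
  define R\<^sub>0 where "R\<^sub>0 x = pair_logistic_risk (pdata x) (p \<theta>t x)
    (\<lambda>y. ln (pmf (pdata x) y / pmf (p \<theta>t x) y))" for x
  have tilted_iff: "proportional (pmf (p \<theta> x))
        (\<lambda>y. pmf (p \<theta>t x) y * (pmf (pdata x) y / pmf (p \<theta>t x) y) powr (1 / lam))
      \<longleftrightarrow> (\<exists>c. \<forall>y. lam * ln (pmf (p \<theta> x) y / pmf (p \<theta>t x) y)
                    = ln (pmf (pdata x) y / pmf (p \<theta>t x) y) + c)" if "\<theta> \<in> \<Theta>" for \<theta> x
    using proportional_powr_iff[OF lam_pos, of "pmf (p \<theta> x)" "pmf (p \<theta>t x)"
        "\<lambda>y. pmf (pdata x) y / pmf (p \<theta>t x) y"] p_pos[OF that] p_pos[OF \<theta>t_in] pdata_pos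
    by simp
  have R\<^sub>0_le: "R\<^sub>0 x \<le> R \<theta> x" for \<theta> x
    unfolding R_def R\<^sub>0_def
    by (rule pair_logistic_risk_log_ratio_le[OF pdata_pos p_pos[OF \<theta>t_in]])
  from realizable obtain \<theta>s where "\<theta>s \<in> \<Theta>" and tilted: "\<forall>x. \<exists>c. \<forall>y.
      lam * ln (pmf (p \<theta>s x) y / pmf (p \<theta>t x) y) = ln (pmf (pdata x) y / pmf (p \<theta>t x) y) + c"
    by (auto simp: tilted_iff)
  have "R \<theta>s = R\<^sub>0"
    using tilted unfolding R_def R\<^sub>0_def by (intro ext) (blast intro: pair_logistic_risk_cong_add_const)
  then have "(\<integral>\<^sup>+x. R \<theta>t1 x \<partial>q) \<le> (\<integral>\<^sup>+x. R\<^sub>0 x \<partial>q)"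
    using \<theta>t1_min[OF \<open>\<theta>s \<in> \<Theta>\<close>]
    unfolding L_SPIN_eq_pair_logistic_risk R_def[symmetric] by simp
  moreover have "(\<integral>\<^sup>+x. R\<^sub>0 x \<partial>q) \<le> (\<integral>\<^sup>+x. ennreal (ln 2) \<partial>q)"
    unfolding R\<^sub>0_def
    by (intro nn_integral_mono pair_logistic_risk_log_ratio_le_ln2 pdata_pos p_pos[OF \<theta>t_in])
  then have "(\<integral>\<^sup>+x. R\<^sub>0 x \<partial>q) \<noteq> \<infinity>"
    by (auto simp: top_unique)
  ultimately have "AE x in q. R \<theta>t1 x = R\<^sub>0 x"
    by (intro AE_eq_if_nn_integral_le) (auto simp: R\<^sub>0_le)
  then show ?thesis
    by (auto simp: AE_measure_pmf_iff tilted_iff[OF \<theta>t1_in] R_def R\<^sub>0_def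
        intro!: pair_logistic_risk_le_log_ratio_imp[OF pdata_pos p_pos[OF \<theta>t_in]])
qed

end
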